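(* Let $I$ be a set of players with $|I|\ge2$ and $S$ a set of states of nature with $|S|\ge2$. Then there is no universal $\infty$-type space on $S$ for player set $I$, and there is no universal $*$-type space on $S$ for player set $I$.
   Context: An $\infty$-field on a nonempty set $M$ is a field of subsets closed under arbitrary intersections. For an $\infty$-field $\Sigma$ on $M$, $\Delta^\infty(M,\Sigma)$ is the set of finitely additive probability measures on $(M,\Sigma)$, endowed with the $\infty$-field generated by the sets $\{\mu:\mu(E)\ge p\}$, $E\in\Sigma$, $p\in[0,1]$. An $\infty$-type space on $S$ for $I$ is $\langle M,\Sigma,(T_i)_{i\in I},\theta\rangle$ with $M$ nonempty, $\Sigma$ an $\infty$-field on $M$, each $T_i:M\to\Delta^\infty(M,\Sigma)$ measurable such that for all $m\in M$, $A\in\Sigma$: $\{m':T_i(m')=T_i(m)\}\subseteq A$ implies $T_i(m)(A)=1$; and $\theta:M\to S$ $\Sigma$–$\mathrm{Pow}(S)$-measurable. A $*$-type space on $S$ for $I$ is $\langle M,(T_i)_{i\in I},\theta\rangle$ with $M$ nonempty, each $T_i$ a function from $M$ to finitely additive probability measures on $(M,\mathrm{Pow}(M))$ with $T_i(m)(\{m':T_i(m')=T_i(m)\})=1$, and $\theta:M\to S$ any function. A type morphism from $\langle M',\Sigma',(T'_i),\theta'\rangle$ to $\langle M,\Sigma,(T_i),\theta\rangle$ (for $*$-type spaces take $\Sigma=\mathrm{Pow}(M)$) is a $\Sigma'$–$\Sigma$-measurable $f:M'\to M$ with $\theta'(m')=\theta(f(m'))$ and $T_i(f(m'))(E)=T'_i(m')(f^{-1}(E))$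 for all $m'$, $E\in\Sigma$, $i\in I$. An $\infty$-type space (resp. $*$-type space) is universal if every $\infty$-type space (resp. $*$-type space) on $S$ for $I$ admits a unique type morphism into it. *)

theory Defs
  imports Complex_Main
begin

definition field_of_sets :: "'a set \<Rightarrow> 'a set set \<Rightarrow> bool" where
  "field_of_sets M \<Sigma> \<longleftrightarrow> \<Sigma> \<subseteq> Pow M \<and> M \<in> \<Sigma> \<and>
     (\<forall>A\<in>\<Sigma>. M - A \<in> \<Sigma>) \<and> (\<forall>A\<in>\<Sigma>. \<forall>B\<in>\<Sigma>. A \<union> B \<in> \<Sigma>)"

text \<open>An infinity-field: a field closed under arbitrary (nonempty) intersections
  (the empty intersection is M by convention, which is in the field anyway).\<close>
definition inf_field :: "'a set \<Rightarrow> 'a set set \<Rightarrow> bool" where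
  "inf_field M \<Sigma> \<longleftrightarrow> field_of_sets M \<Sigma> \<and> (\<forall>F. F \<subseteq> \<Sigma> \<and> F \<noteq> {} \<longrightarrow> \<Inter>F \<in> \<Sigma>)"

definition inf_field_generated :: "'a set \<Rightarrow> 'a set set \<Rightarrow> 'a set set" where
  "inf_field_generated M G = \<Inter>{\<Sigma>. inf_field M \<Sigma> \<and> G \<subseteq> \<Sigma>}"

text \<open>A finitely additive probability measure on (M, Sigma), represented as a function on
  sets which is 0 outside Sigma (so that equality of measures is equality of functions).\<close>
definition fa_prob :: "'a set \<Rightarrow> 'a set set \<Rightarrow> ('a set \<Rightarrow> real) \<Rightarrow> bool" where
  "fa_prob M \<Sigma> \<mu> \<longleftrightarrow> (\<forall>E\<in>\<Sigma>. 0 \<le> \<mu> E) \<and> \<mu> M = 1 \<and>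
     (\<forall>A\<in>\<Sigma>. \<forall>B\<in>\<Sigma>. A \<inter> B = {} \<longrightarrow> \<mu> (A \<union> B) = \<mu> A + \<mu> B) \<and>
     (\<forall>E. E \<notin> \<Sigma> \<longrightarrow> \<mu> E = 0)"

definition Delta :: "'a set \<Rightarrow> 'a set set \<Rightarrow> ('a set \<Rightarrow> real) set" where
  "Delta M \<Sigma> = {\<mu>. fa_prob M \<Sigma> \<mu>}"

definition Delta_field :: "'a set \<Rightarrow> 'a set set \<Rightarrow> ('a set \<Rightarrow> real) set set" where
  "Delta_field M \<Sigma> = inf_field_generated (Delta M \<Sigma>)
     {{\<mu>\<in>Delta M \<Sigma>. \<mu> E \<ge> p} | E p. E \<in> \<Sigma> \<and> 0 \<le> p \<and> p \<le> 1}"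

definition meas :: "'a set \<Rightarrow> 'a set set \<Rightarrow> 'b set \<Rightarrow> 'b set set \<Rightarrow> ('a \<Rightarrow> 'b) \<Rightarrow> bool" where
  "meas M \<Sigma> N \<Sigma>' f \<longleftrightarrow> (\<forall>x\<in>M. f x \<in> N) \<and> (\<forall>E\<in>\<Sigma>'. {x\<in>M. f x \<in> E} \<in> \<Sigma>)"

definition inf_type_space ::
  "'i set \<Rightarrow> 's set \<Rightarrow> 'm set \<Rightarrow> 'm set set \<Rightarrow> ('i \<Rightarrow> 'm \<Rightarrow> ('m set \<Rightarrow> real)) \<Rightarrow> ('m \<Rightarrow> 's) \<Rightarrow> bool"
  where
  "inf_type_space I S M \<Sigma> T \<theta> \<longleftrightarrow> M \<noteq> {} \<and> inf_field M \<Sigma> \<and>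
     (\<forall>i\<in>I. meas M \<Sigma> (Delta M \<Sigma>) (Delta_field M \<Sigma>) (T i)) \<and>
     (\<forall>i\<in>I. \<forall>m\<in>M. \<forall>A\<in>\<Sigma>. {m'\<in>M. T i m' = T i m} \<subseteq> A \<longrightarrow> T i m A = 1) \<and>
     meas M \<Sigma> S (Pow S) \<theta>"

definition star_type_space ::
  "'i set \<Rightarrow> 's set \<Rightarrow> 'm set \<Rightarrow> ('i \<Rightarrow> 'm \<Rightarrow> ('m set \<Rightarrow> real)) \<Rightarrow> ('m \<Rightarrow> 's) \<Rightarrow> bool"
  where
  "star_type_space I S M T \<theta> \<longleftrightarrow> M \<noteq> {} \<and>
     (\<forall>i\<in>I. \<forall>m\<in>M. fa_prob M (Pow M) (T i m)) \<and>
     (\<forall>i\<in>I. \<forall>m\<in>M. T i m {m'\<in>M. T i m' = T i m} = 1) \<and>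
     (\<forall>m\<in>M. \<theta> m \<in> S)"

definition type_morphism ::
  "'i set \<Rightarrow> 'c set \<Rightarrow> 'c set set \<Rightarrow> ('i \<Rightarrow> 'c \<Rightarrow> ('c set \<Rightarrow> real)) \<Rightarrow> ('c \<Rightarrow> 's) \<Rightarrow>
   'm set \<Rightarrow> 'm set set \<Rightarrow> ('i \<Rightarrow> 'm \<Rightarrow> ('m set \<Rightarrow> real)) \<Rightarrow> ('m \<Rightarrow> 's) \<Rightarrow> ('c \<Rightarrow> 'm) \<Rightarrow> bool"
  where
  "type_morphism I M' \<Sigma>' T' \<theta>' M \<Sigma> T \<theta> f \<longleftrightarrow> meas M' \<Sigma>' M \<Sigma> f \<and>
     (\<forall>m'\<in>M'. \<theta>' m' = \<theta> (f m')) \<and>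
     (\<forall>i\<in>I. \<forall>m'\<in>M'. \<forall>E\<in>\<Sigma>. T i (f m') E = T' i m' {x\<in>M'. f x \<in> E})"

text \<open>Since HOL cannot quantify over types inside a formula, universality is tested
  against all type spaces whose carrier lies in a given type 'c (passed as TYPE('c)).\<close>
definition inf_universal_wrt ::
  "'c itself \<Rightarrow> 'i set \<Rightarrow> 's set \<Rightarrow> 'm set \<Rightarrow> 'm set set \<Rightarrow> ('i \<Rightarrow> 'm \<Rightarrow> ('m set \<Rightarrow> real)) \<Rightarrow> ('m \<Rightarrow> 's) \<Rightarrow> bool"
  where
  "inf_universal_wrt (_::'c itself) I S M \<Sigma> T \<theta> \<longleftrightarrow> inf_type_space I S M \<Sigma> T \<theta> \<and>
     (\<forall>(M'::'c set) \<Sigma>' T' \<theta>'. inf_type_space I S M' \<Sigma>' T' \<theta>' \<longrightarrow>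
        (\<exists>f. type_morphism I M' \<Sigma>' T' \<theta>' M \<Sigma> T \<theta> f) \<and>
        (\<forall>f g. type_morphism I M' \<Sigma>' T' \<theta>' M \<Sigma> T \<theta> f \<and>
               type_morphism I M' \<Sigma>' T' \<theta>' M \<Sigma> T \<theta> g \<longrightarrow> (\<forall>x\<in>M'. f x = g x)))"

definition star_universal_wrt ::
  "'c itself \<Rightarrow> 'i set \<Rightarrow> 's set \<Rightarrow> 'm set \<Rightarrow> ('i \<Rightarrow> 'm \<Rightarrow> ('m set \<Rightarrow> real)) \<Rightarrow> ('m \<Rightarrow> 's) \<Rightarrow> bool"
  where
  "star_universal_wrt (_::'c itself) I S M T \<theta> \<longleftrightarrow> star_type_space I S M T \<theta> \<and>
     (\<forall>(M'::'c set) T' \<theta>'. star_type_space I S M' T' \<theta>' \<longrightarrow>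
        (\<exists>f. type_morphism I M' (Pow M') T' \<theta>' M (Pow M) T \<theta> f) \<and>
        (\<forall>f g. type_morphism I M' (Pow M') T' \<theta>' M (Pow M) T \<theta> f \<and>
               type_morphism I M' (Pow M') T' \<theta>' M (Pow M) T \<theta> g \<longrightarrow> (\<forall>x\<in>M'. f x = g x)))"

end

(* Suppose (M, T, \<theta>) were a universal type space and a, b were two players.  Let K_a be the
   set of profiles (\<theta> x, (T_j x)_{j \<noteq> a}) realised at points x of M.  Every finitely
   additive probability \<rho> on K_a is player a's belief at some point: adjoin to M a twin of each
   point on which a believes a lift of \<rho> and everything else is copied; the unique morphism
   back into M fixes the original points, so it sends the twins to points with the same
   profiles at which a believes \<rho>.  Since T_a is part of the profiles of b, this embeds
   \<Delta>(K_a) into K_b and, symmetrically, \<Delta>(K_b) into K_a.  Two states of nature make \<Delta>(K_a)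
   infinite, hence K_b infinite; ultrafilters from an independent family then give
   Pow K_b \<lesssim> \<Delta>(K_b) \<lesssim> K_a \<lesssim> \<Delta>(K_a) \<lesssim> K_b, contradicting Cantor's theorem.

   For infinity-type spaces, uniqueness of the morphism from a copy of M, against the map that
   swaps two points not separated by \<Sigma>, shows that \<Sigma> separates points; an infinity-field that
   separates points is the full power set, and the space is then a universal *-type space. *)

theory Submission
  imports Defs "HOL-Algebra.Free_Abelian_Groups"
begin

section \<open>Finitely additive probabilities\<close>

lemma fa_prob_Pow_mono:
  assumes "fa_prob A (Pow A) \<mu>" "X \<subseteq> Y" "Y \<subseteq> A"
  shows "\<mu> X \<le> \<mu> Y"
proof -
  have "\<mu> Y = \<mu> (X \<union> (Y - X))" using assms(2) by (simp add: Un_absorb1)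
  also have "\<dots> = \<mu> X + \<mu> (Y - X)" using assms unfolding fa_prob_def by blast
  finally have "\<mu> Y = \<mu> X + \<mu> (Y - X)" .
  moreover have "0 \<le> \<mu> (Y - X)" using assms unfolding fa_prob_def by blast
  ultimately show ?thesis by linarith
qed

lemma fa_prob_Pow_eq_1_mono:
  assumes "fa_prob A (Pow A) \<mu>" "\<mu> X = 1" "X \<subseteq> Y" "Y \<subseteq> A"
  shows "\<mu> Y = 1"
  using fa_prob_Pow_mono[OF assms(1,3,4)] fa_prob_Pow_mono[OF assms(1) assms(4) order_refl] assms(1,2)
  unfolding fa_prob_def by linarith

lemma fa_prob_compl:
  assumes "field_of_sets M \<Sigma>" "fa_prob M \<Sigma> \<mu>" "E \<in> \<Sigma>"
  shows "\<mu> (M - E) = 1 - \<mu> E"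
proof -
  have "E \<subseteq> M" "M - E \<in> \<Sigma>"
    using assms(1,3) unfolding field_of_sets_def by blast+
  then have "\<mu> (E \<union> (M - E)) = \<mu> E + \<mu> (M - E)"
    using assms(2,3) unfolding fa_prob_def by blast
  moreover have "E \<union> (M - E) = M" using \<open>E \<subseteq> M\<close> by blast
  ultimately show ?thesis using assms(2) unfolding fa_prob_def by simp
qed

lemma fa_prob_eq_if_le:
  assumes \<Sigma>: "field_of_sets M \<Sigma>" and \<mu>: "fa_prob M \<Sigma> \<mu>" and \<nu>: "fa_prob M \<Sigma> \<nu>"
    and le: "\<And>E. E \<in> \<Sigma> \<Longrightarrow> \<mu> E \<le> \<nu> E"
  shows "\<nu> = \<mu>"
proof
  fix E show "\<nu> E = \<mu> E"
  proof (cases "E \<in> \<Sigma>")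
    case True
    then have "M - E \<in> \<Sigma>" using \<Sigma> unfolding field_of_sets_def by blast
    then show ?thesis
      using le[OF True] le[OF \<open>M - E \<in> \<Sigma>\<close>] fa_prob_compl[OF \<Sigma> \<mu> True] fa_prob_compl[OF \<Sigma> \<nu> True]
      by linarith
  next
    case False
    then show ?thesis using \<mu> \<nu> unfolding fa_prob_def by simp
  qed
qed

lemma fa_prob_convex:
  assumes "fa_prob A \<Sigma> \<mu>" "fa_prob A \<Sigma> \<nu>" "0 \<le> t" "t \<le> 1"
  shows "fa_prob A \<Sigma> (\<lambda>E. t * \<mu> E + (1 - t) * \<nu> E)"
  using assms unfolding fa_prob_def
  by (auto intro!: add_nonneg_nonneg mult_nonneg_nonneg simp: distrib_left)

definition pushforward :: "'a set \<Rightarrow> ('a \<Rightarrow> 'b) \<Rightarrow> 'b set \<Rightarrow> ('a set \<Rightarrow> real) \<Rightarrow> 'b set \<Rightarrow> real" where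
  "pushforward A h B \<mu> E = (if E \<subseteq> B then \<mu> {x\<in>A. h x \<in> E} else 0)"

definition pushforward_field :: "'a set \<Rightarrow> ('a \<Rightarrow> 'b) \<Rightarrow> 'b set \<Rightarrow> 'a set set \<Rightarrow> 'b set set" where
  "pushforward_field A h B \<Sigma> = {E. E \<subseteq> B \<and> {x\<in>A. h x \<in> E} \<in> \<Sigma>}"

lemma pushforward_field_Pow [simp]: "pushforward_field A h B (Pow A) = Pow B"
  unfolding pushforward_field_def by blast

lemma fa_prob_pushforward:
  assumes \<mu>: "fa_prob A \<Sigma> \<mu>" and h: "h ` A \<subseteq> B"
  shows "fa_prob B (pushforward_field A h B \<Sigma>) (pushforward A h B \<mu>)"
  unfolding fa_prob_def
proof (intro conjI ballI allI impI)
  fix E assume "E \<in> pushforward_field A h B \<Sigma>"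
  then show "0 \<le> pushforward A h B \<mu> E"
    using \<mu> by (simp add: pushforward_def pushforward_field_def fa_prob_def)
next
  have "{x\<in>A. h x \<in> B} = A" using h by blast
  then show "pushforward A h B \<mu> B = 1" using \<mu> by (simp add: pushforward_def fa_prob_def)
next
  fix E F assume EF: "E \<in> pushforward_field A h B \<Sigma>" "F \<in> pushforward_field A h B \<Sigma>" "E \<inter> F = {}"
  have "{x\<in>A. h x \<in> E \<union> F} = {x\<in>A. h x \<in> E} \<union> {x\<in>A. h x \<in> F}" by blast
  moreover have "{x\<in>A. h x \<in> E} \<inter> {x\<in>A. h x \<in> F} = {}" using EF(3) by blast
  ultimately show "pushforward A h B \<mu> (E \<union> F) = pushforward A h B \<mu> E + pushforward A h B \<mu> F"
    using \<mu> EF(1,2) by (simp add: pushforward_def pushforward_field_def fa_prob_def)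
next
  fix E assume "E \<notin> pushforward_field A h B \<Sigma>"
  then show "pushforward A h B \<mu> E = 0"
    using \<mu> by (simp add: pushforward_def pushforward_field_def fa_prob_def)
qed

lemma fa_prob_Pow_pushforward:
  "fa_prob A (Pow A) \<mu> \<Longrightarrow> h ` A \<subseteq> B \<Longrightarrow> fa_prob B (Pow B) (pushforward A h B \<mu>)"
  using fa_prob_pushforward[of A "Pow A"] by simp

lemma pushforward_comp:
  "h ` A \<subseteq> B \<Longrightarrow> pushforward B g C (pushforward A h B \<mu>) = pushforward A (g \<circ> h) C \<mu>"
proof
  fix E assume "h ` A \<subseteq> B"
  then have "{x\<in>A. h x \<in> {y\<in>B. g y \<in> E}} = {x\<in>A. (g \<circ> h) x \<in> E}" by auto
  then show "pushforward B g C (pushforward A h B \<mu>) E = pushforward A (g \<circ> h) C \<mu> E"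
    by (simp add: pushforward_def)
qed

lemma pushforward_cong:
  "(\<And>x. x \<in> A \<Longrightarrow> h x = h' x) \<Longrightarrow> pushforward A h B \<mu> = pushforward A h' B \<mu>"
proof
  fix E assume "\<And>x. x \<in> A \<Longrightarrow> h x = h' x"
  then have "{x\<in>A. h x \<in> E} = {x\<in>A. h' x \<in> E}" by auto
  then show "pushforward A h B \<mu> E = pushforward A h' B \<mu> E" by (simp add: pushforward_def)
qed

lemma pushforward_id:
  assumes "fa_prob A (Pow A) \<mu>"
  shows "pushforward A (\<lambda>x. x) A \<mu> = \<mu>"
proof
  fix E show "pushforward A (\<lambda>x. x) A \<mu> E = \<mu> E"
    using assms unfolding pushforward_def fa_prob_def by (auto simp: Int_absorb1 Collect_conj_eq)
qed

lemma pushforward_eq_1: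
  assumes "fa_prob A (Pow A) \<mu>" "\<mu> X = 1" "X \<subseteq> A" "h ` X \<subseteq> Y" "Y \<subseteq> B"
  shows "pushforward A h B \<mu> Y = 1"
  using fa_prob_Pow_eq_1_mono[OF assms(1,2), of "{x\<in>A. h x \<in> Y}"] assms(3-5)
  by (auto simp: pushforward_def)

lemma Delta_Pow_lepoll_mono:
  assumes "A \<lesssim> B"
  shows "Delta A (Pow A) \<lesssim> Delta B (Pow B)"
proof -
  obtain h where h: "inj_on h A" "h ` A \<subseteq> B" using assms unfolding lepoll_def by blast
  have "pushforward B (inv_into A h) A (pushforward A h B \<mu>) = \<mu>" if "\<mu> \<in> Delta A (Pow A)" for \<mu>
  proof -
    have "pushforward B (inv_into A h) A (pushforward A h B \<mu>) = pushforward A (\<lambda>x. x) A \<mu>"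
      using h by (simp add: pushforward_comp cong: pushforward_cong)
    also have "\<dots> = \<mu>" using that by (simp add: Delta_def pushforward_id)
    finally show ?thesis .
  qed
  then have "inj_on (pushforward A h B) (Delta A (Pow A))" by (metis inj_on_inverseI)
  moreover have "pushforward A h B ` Delta A (Pow A) \<subseteq> Delta B (Pow B)"
    using h(2) by (auto simp: Delta_def fa_prob_Pow_pushforward)
  ultimately show ?thesis unfolding lepoll_def by blast
qed

definition point_mass :: "'a set \<Rightarrow> 'a \<Rightarrow> 'a set \<Rightarrow> real" where
  "point_mass A u E = of_bool (E \<subseteq> A \<and> u \<in> E)"

lemma fa_prob_point_mass: "u \<in> A \<Longrightarrow> fa_prob A (Pow A) (point_mass A u)"
  unfolding fa_prob_def point_mass_def by auto

lemma lepoll_Delta_Pow: "A \<lesssim> Delta A (Pow A)"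
proof -
  have "inj_on (point_mass A) A"
  proof (rule inj_onI)
    fix x y assume x: "x \<in> A" and eq: "point_mass A x = point_mass A y"
    have "point_mass A x {x} = 1" using x by (simp add: point_mass_def)
    then have "point_mass A y {x} = 1" by (simp only: eq)
    then show "x = y" by (auto simp: point_mass_def)
  qed
  moreover have "point_mass A ` A \<subseteq> Delta A (Pow A)"
    by (auto simp: Delta_def fa_prob_point_mass)
  ultimately show ?thesis unfolding lepoll_def by blast
qed

lemma infinite_Delta_Pow:
  assumes "u \<in> A" "v \<in> A" "u \<noteq> v"
  shows "infinite (Delta A (Pow A))"
proof
  define mix where "mix t = (\<lambda>E. t * point_mass A u E + (1 - t) * point_mass A v E)" for t :: real
  have "mix t {u} = t" for t using assms by (simp add: mix_def point_mass_def)
  then have "inj_on mix {0..1}" by (metis inj_onI)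
  then have "infinite (mix ` {0..1})" by (simp add: finite_image_iff)
  moreover have "mix ` {0..1} \<subseteq> Delta A (Pow A)"
    using assms by (auto simp: Delta_def mix_def intro!: fa_prob_convex fa_prob_point_mass)
  moreover assume "finite (Delta A (Pow A))"
  ultimately show False using finite_subset by blast
qed

section \<open>Ultrafilters and cardinality\<close>

definition finite_intersection_property :: "'a set \<Rightarrow> 'a set set \<Rightarrow> bool" where
  "finite_intersection_property L G \<longleftrightarrow> (\<forall>H. finite H \<and> H \<subseteq> G \<longrightarrow> L \<inter> \<Inter>H \<noteq> {})"

(* The maximal families with the finite intersection property are the ultrafilters on L. *)
definition maximal_fip_family :: "'a set \<Rightarrow> 'a set set \<Rightarrow> bool" where
  "maximal_fip_family L G \<longleftrightarrow> G \<subseteq> Pow L \<and> finite_intersection_property L G \<and>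
     (\<forall>X. X \<subseteq> L \<and> finite_intersection_property L (insert X G) \<longrightarrow> X \<in> G)"

lemma maximal_fip_family_exists:
  assumes "finite_intersection_property L F" "F \<subseteq> Pow L"
  obtains G where "F \<subseteq> G" "maximal_fip_family L G"
proof -
  define \<A> where "\<A> = {G. F \<subseteq> G \<and> G \<subseteq> Pow L \<and> finite_intersection_property L G}"
  have "\<exists>G\<in>\<A>. \<forall>X\<in>\<A>. G \<subseteq> X \<longrightarrow> X = G"
  proof (rule subset_Zorn_nonempty)
    show "\<A> \<noteq> {}" using assms by (auto simp: \<A>_def)
  next
    fix \<C> assume \<C>: "\<C> \<noteq> {}" "subset.chain \<A> \<C>"
    have "finite_intersection_property L (\<Union>\<C>)"
      unfolding finite_intersection_property_def
    proof (intro allI impI)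
      fix H assume H: "finite H \<and> H \<subseteq> \<Union>\<C>"
      then obtain G where "G \<in> \<C>" "H \<subseteq> G"
        using finite_subset_Union_chain[of H \<C> \<A>] \<C> by blast
      then show "L \<inter> \<Inter>H \<noteq> {}"
        using \<C>(2) H by (auto simp: \<A>_def finite_intersection_property_def subset.chain_def)
    qed
    then show "\<Union>\<C> \<in> \<A>" using \<C> by (fastforce simp: \<A>_def subset.chain_def)
  qed
  then obtain G where G: "G \<in> \<A>" "\<And>X. X \<in> \<A> \<Longrightarrow> G \<subseteq> X \<Longrightarrow> X = G" by blast
  have "X \<in> G" if "X \<subseteq> L" "finite_intersection_property L (insert X G)" for X
  proof -
    have "insert X G \<in> \<A>" using G(1) that by (auto simp: \<A>_def)
    then have "insert X G = G" using G(2) by blast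
    then show ?thesis by blast
  qed
  then have "maximal_fip_family L G" using G(1) by (simp add: \<A>_def maximal_fip_family_def)
  moreover have "F \<subseteq> G" using G(1) by (simp add: \<A>_def)
  ultimately show thesis using that by blast
qed

lemma maximal_fip_familyD:
  "maximal_fip_family L G \<Longrightarrow> finite H \<Longrightarrow> H \<subseteq> G \<Longrightarrow> L \<inter> \<Inter>H \<noteq> {}"
  unfolding maximal_fip_family_def finite_intersection_property_def by blast

lemma maximal_fip_family_not_memD:
  assumes G: "maximal_fip_family L G" and "X \<subseteq> L" "X \<notin> G"
  obtains H where "finite H" "H \<subseteq> G" "L \<inter> X \<inter> \<Inter>H = {}"
proof -
  have "\<not> finite_intersection_property L (insert X G)"
    using assms unfolding maximal_fip_family_def by blast
  then obtain H where H: "finite H" "H \<subseteq> insert X G" "L \<inter> \<Inter>H = {}"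
    unfolding finite_intersection_property_def by blast
  have "L \<inter> X \<inter> \<Inter>(H - {X}) \<subseteq> L \<inter> \<Inter>H" by blast
  then show thesis using that[of "H - {X}"] H by blast
qed

lemma maximal_fip_family_compl:
  assumes G: "maximal_fip_family L G" and X: "X \<subseteq> L"
  shows "X \<in> G \<or> L - X \<in> G"
proof (rule ccontr)
  assume "\<not> (X \<in> G \<or> L - X \<in> G)"
  then obtain H1 H2 where H1: "finite H1" "H1 \<subseteq> G" "L \<inter> X \<inter> \<Inter>H1 = {}"
    and H2: "finite H2" "H2 \<subseteq> G" "L \<inter> (L - X) \<inter> \<Inter>H2 = {}"
    using maximal_fip_family_not_memD[OF G] X by (metis Diff_subset)
  have "L \<inter> \<Inter>(H1 \<union> H2) \<noteq> {}" using maximal_fip_familyD[OF G] H1 H2 by simp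
  then show False using H1(3) H2(3) by blast
qed

lemma maximal_fip_family_mono:
  assumes G: "maximal_fip_family L G" and "X \<in> G" "X \<subseteq> Y" "Y \<subseteq> L"
  shows "Y \<in> G"
proof -
  have "finite_intersection_property L (insert Y G)"
    unfolding finite_intersection_property_def
  proof (intro allI impI)
    fix H assume H: "finite H \<and> H \<subseteq> insert Y G"
    have "L \<inter> \<Inter>(insert X (H - {Y})) \<noteq> {}"
      by (rule maximal_fip_familyD[OF G]) (use H assms(2) in auto)
    then show "L \<inter> \<Inter>H \<noteq> {}" using assms(3) by blast
  qed
  then show ?thesis using G assms(4) unfolding maximal_fip_family_def by blast
qed

lemma fa_prob_maximal_fip_family:
  assumes G: "maximal_fip_family L G"
  shows "fa_prob L (Pow L) (\<lambda>E. of_bool (E \<in> G))"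
  unfolding fa_prob_def
proof (intro conjI ballI allI impI)
  have "{} \<notin> G" using maximal_fip_familyD[OF G, of "{{}}"] by auto
  then show "of_bool (L \<in> G) = (1::real)" using maximal_fip_family_compl[OF G, of L] by simp
next
  fix A B assume AB: "A \<in> Pow L" "B \<in> Pow L" "A \<inter> B = {}"
  have not_both: "\<not> (A \<in> G \<and> B \<in> G)"
    using maximal_fip_familyD[OF G, of "{A, B}"] AB(3) by (auto simp: Int_assoc)
  have "A \<union> B \<in> G \<longleftrightarrow> A \<in> G \<or> B \<in> G"
  proof
    assume "A \<union> B \<in> G"
    show "A \<in> G \<or> B \<in> G"
    proof (rule ccontr)
      assume "\<not> (A \<in> G \<or> B \<in> G)"
      then have "L - A \<in> G" "L - B \<in> G" using maximal_fip_family_compl[OF G] AB by auto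
      moreover have "L \<inter> \<Inter>{L - A, L - B, A \<union> B} = {}" by blast
      ultimately show False
        using maximal_fip_familyD[OF G, of "{L - A, L - B, A \<union> B}"] \<open>A \<union> B \<in> G\<close> by simp
    qed
  next
    assume "A \<in> G \<or> B \<in> G"
    then show "A \<union> B \<in> G" using maximal_fip_family_mono[OF G] AB by blast
  qed
  then show "of_bool (A \<union> B \<in> G) = of_bool (A \<in> G) + (of_bool (B \<in> G) :: real)"
    using not_both by auto
next
  fix E assume "E \<notin> Pow L"
  then show "of_bool (E \<in> G) = (0::real)" using G unfolding maximal_fip_family_def by auto
qed auto

definition Fpow_containing :: "'a set \<Rightarrow> 'a \<Rightarrow> 'a set set" where
  "Fpow_containing A a = {F\<in>Fpow A. a \<in> F}"

definition independent_choice :: "'a set \<Rightarrow> 'a set \<Rightarrow> 'a set set set" where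
  "independent_choice A B = Fpow_containing A ` B \<union> (\<lambda>a. Fpow A - Fpow_containing A a) ` (A - B)"

lemma inj_on_Fpow_containing: "inj_on (Fpow_containing A) A"
proof (rule inj_onI)
  fix a b assume a: "a \<in> A" and eq: "Fpow_containing A a = Fpow_containing A b"
  have "{a} \<in> Fpow_containing A a" using a by (simp add: Fpow_containing_def Fpow_def)
  then have "{a} \<in> Fpow_containing A b" by (simp only: eq)
  then show "a = b" by (simp add: Fpow_containing_def)
qed

(* The sets Fpow_containing A a form an independent family on Fpow A: the intersection of a finite
   subfamily of independent_choice A B contains the finite set of those a \<in> B whose
   Fpow_containing A a it involves. *)
lemma fip_independent_choice:
  assumes "B \<subseteq> A"
  shows "finite_intersection_property (Fpow A) (independent_choice A B)"
  unfolding finite_intersection_property_def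
proof (intro allI impI)
  fix H assume H: "finite H \<and> H \<subseteq> independent_choice A B"
  define P where "P = {a\<in>B. Fpow_containing A a \<in> H}"
  have "P \<subseteq> Fpow_containing A -` H \<inter> A" using assms by (auto simp: P_def)
  then have "finite P" using finite_vimage_IntI[OF _ inj_on_Fpow_containing] H by (meson finite_subset)
  then have "P \<in> Fpow A" using assms by (auto simp: P_def Fpow_def)
  moreover have "P \<in> Y" if "Y \<in> H" for Y
  proof -
    have "Y \<in> independent_choice A B" using H that by blast
    then consider a where "a \<in> B" "Y = Fpow_containing A a"
      | a where "a \<in> A - B" "Y = Fpow A - Fpow_containing A a"
      unfolding independent_choice_def by blast
    then show ?thesis
      by cases (use \<open>P \<in> Fpow A\<close> that in \<open>auto simp: P_def Fpow_containing_def\<close>)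
  qed
  ultimately show "Fpow A \<inter> \<Inter>H \<noteq> {}" by blast
qed

lemma Pow_lepoll_Delta_Fpow: "Pow A \<lesssim> Delta (Fpow A) (Pow (Fpow A))"
proof -
  have "\<exists>G. independent_choice A B \<subseteq> G \<and> maximal_fip_family (Fpow A) G" if "B \<subseteq> A" for B
  proof (rule maximal_fip_family_exists[OF fip_independent_choice[OF that]])
    show "independent_choice A B \<subseteq> Pow (Fpow A)"
      by (auto simp: independent_choice_def Fpow_containing_def)
  qed blast
  then have "\<forall>B\<in>Pow A. \<exists>G. independent_choice A B \<subseteq> G \<and> maximal_fip_family (Fpow A) G" by blast
  from bchoice[OF this] obtain G where G: "\<And>B. B \<subseteq> A \<Longrightarrow>
      independent_choice A B \<subseteq> G B \<and> maximal_fip_family (Fpow A) (G B)"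
    by blast
  define \<mu> where "\<mu> B = (\<lambda>E. of_bool (E \<in> G B) :: real)" for B
  have sub: "B1 \<subseteq> B2" if B: "B1 \<subseteq> A" "B2 \<subseteq> A" "\<mu> B1 = \<mu> B2" for B1 B2
  proof
    fix a assume a: "a \<in> B1"
    then have "Fpow_containing A a \<in> G B1" using G[OF B(1)] by (auto simp: independent_choice_def)
    then have "\<mu> B1 (Fpow_containing A a) = 1" by (simp add: \<mu>_def)
    then have "\<mu> B2 (Fpow_containing A a) = 1" using B(3) by simp
    then have in_G: "Fpow_containing A a \<in> G B2" by (simp add: \<mu>_def)
    show "a \<in> B2"
    proof (rule ccontr)
      assume "a \<notin> B2"
      then have "Fpow A - Fpow_containing A a \<in> independent_choice A B2"
        using a B(1) unfolding independent_choice_def by blast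
      then have "Fpow A - Fpow_containing A a \<in> G B2" using G[OF B(2)] by blast
      then show False
        using maximal_fip_familyD[OF conjunct2[OF G[OF B(2)]],
            of "{Fpow_containing A a, Fpow A - Fpow_containing A a}"] in_G by auto
    qed
  qed
  have "inj_on \<mu> (Pow A)"
  proof (rule inj_onI)
    fix B1 B2 assume "B1 \<in> Pow A" "B2 \<in> Pow A" "\<mu> B1 = \<mu> B2"
    then show "B1 = B2" using sub[of B1 B2] sub[of B2 B1] by auto
  qed
  moreover have "\<mu> ` Pow A \<subseteq> Delta (Fpow A) (Pow (Fpow A))"
    using G fa_prob_maximal_fip_family by (auto simp: \<mu>_def Delta_def)
  ultimately show ?thesis unfolding lepoll_def by blast
qed

lemma Pow_lepoll_Delta_Pow:
  assumes "infinite A"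
  shows "Pow A \<lesssim> Delta A (Pow A)"
  using Pow_lepoll_Delta_Fpow Delta_Pow_lepoll_mono[OF eqpoll_imp_lepoll[OF eqpoll_Fpow[OF assms]]]
  by (rule lepoll_trans)

lemma Delta_Pow_lepoll_cycle_False:
  assumes AB: "Delta A (Pow A) \<lesssim> B" and BA: "Delta B (Pow B) \<lesssim> A"
    and "u \<in> A" "v \<in> A" "u \<noteq> v"
  shows False
proof -
  have "(UNIV :: nat set) \<lesssim> Delta A (Pow A)"
    using infinite_Delta_Pow[OF assms(3-5)] infinite_le_lepoll by blast
  then have "infinite B" using AB infinite_le_lepoll lepoll_trans by blast
  then have "Pow B \<lesssim> Delta B (Pow B)" by (rule Pow_lepoll_Delta_Pow)
  also note BA
  also have "A \<lesssim> Delta A (Pow A)" by (rule lepoll_Delta_Pow)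
  also note AB
  finally have "B \<prec> B" by (rule lesspoll_trans2[OF lesspoll_Pow_self])
  then show False by simp
qed

section \<open>Infinity-fields\<close>

lemma inf_field_Pow: "inf_field M (Pow M)"
  unfolding inf_field_def field_of_sets_def by auto

lemma inf_field_subset_Pow: "inf_field M \<Sigma> \<Longrightarrow> \<Sigma> \<subseteq> Pow M"
  by (simp add: inf_field_def field_of_sets_def)

lemma inf_field_pushforward_field:
  assumes \<Sigma>: "inf_field A \<Sigma>" and h: "h ` A \<subseteq> B"
  shows "inf_field B (pushforward_field A h B \<Sigma>)"
proof -
  have \<Sigma>_closed: "A \<in> \<Sigma>" "\<And>E. E \<in> \<Sigma> \<Longrightarrow> A - E \<in> \<Sigma>"
    "\<And>E F. E \<in> \<Sigma> \<Longrightarrow> F \<in> \<Sigma> \<Longrightarrow> E \<union> F \<in> \<Sigma>"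
    "\<And>\<F>. \<F> \<subseteq> \<Sigma> \<Longrightarrow> \<F> \<noteq> {} \<Longrightarrow> \<Inter>\<F> \<in> \<Sigma>"
    using \<Sigma> unfolding inf_field_def field_of_sets_def by blast+
  define pre where "pre E = {x\<in>A. h x \<in> E}" for E
  have mem: "E \<in> pushforward_field A h B \<Sigma> \<longleftrightarrow> E \<subseteq> B \<and> pre E \<in> \<Sigma>" for E
    by (simp add: pushforward_field_def pre_def)
  show ?thesis
    unfolding inf_field_def field_of_sets_def
  proof (intro conjI ballI allI impI)
    show "pushforward_field A h B \<Sigma> \<subseteq> Pow B" using mem by blast
    have "pre B = A" using h by (auto simp: pre_def)
    then show "B \<in> pushforward_field A h B \<Sigma>" using \<Sigma>_closed(1) mem by simp
  next
    fix E assume "E \<in> pushforward_field A h B \<Sigma>"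
    moreover have "pre (B - E) = A - pre E" using h by (auto simp: pre_def)
    ultimately show "B - E \<in> pushforward_field A h B \<Sigma>" using \<Sigma>_closed(2) mem by auto
  next
    fix E F assume "E \<in> pushforward_field A h B \<Sigma>" "F \<in> pushforward_field A h B \<Sigma>"
    moreover have "pre (E \<union> F) = pre E \<union> pre F" by (auto simp: pre_def)
    ultimately show "E \<union> F \<in> pushforward_field A h B \<Sigma>" using \<Sigma>_closed(3) mem by auto
  next
    fix \<F> assume \<F>: "\<F> \<subseteq> pushforward_field A h B \<Sigma> \<and> \<F> \<noteq> {}"
    then have "pre ` \<F> \<subseteq> \<Sigma>" "pre ` \<F> \<noteq> {}" using mem by auto
    then have "\<Inter>(pre ` \<F>) \<in> \<Sigma>" by (rule \<Sigma>_closed(4))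
    moreover have "pre (\<Inter>\<F>) = \<Inter>(pre ` \<F>)" using \<F> by (auto simp: pre_def)
    moreover have "\<Inter>\<F> \<subseteq> B" using \<F> mem by blast
    ultimately show "\<Inter>\<F> \<in> pushforward_field A h B \<Sigma>" using mem by simp
  qed
qed

lemma Inter_in_inf_field_generated: "\<F> \<subseteq> G \<Longrightarrow> \<F> \<noteq> {} \<Longrightarrow> \<Inter>\<F> \<in> inf_field_generated N G"
  unfolding inf_field_generated_def inf_field_def by blast

lemma Delta_field_generator:
  "E \<in> \<Sigma> \<Longrightarrow> 0 \<le> p \<Longrightarrow> p \<le> 1 \<Longrightarrow> {\<mu>\<in>Delta M \<Sigma>. p \<le> \<mu> E} \<in> Delta_field M \<Sigma>"
  unfolding Delta_field_def inf_field_generated_def by blast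

lemma meas_inf_field_generatedI:
  assumes "inf_field A \<Sigma>" "G \<subseteq> Pow B" "h ` A \<subseteq> B" "\<And>E. E \<in> G \<Longrightarrow> {x\<in>A. h x \<in> E} \<in> \<Sigma>"
  shows "meas A \<Sigma> B (inf_field_generated B G) h"
proof -
  have "G \<subseteq> pushforward_field A h B \<Sigma>" using assms(2,4) by (auto simp: pushforward_field_def)
  then have "inf_field_generated B G \<subseteq> pushforward_field A h B \<Sigma>"
    using inf_field_pushforward_field[OF assms(1,3)] unfolding inf_field_generated_def by blast
  then show ?thesis using assms(3) by (auto simp: meas_def pushforward_field_def)
qed

lemma singleton_in_Delta_field:
  assumes \<Sigma>: "inf_field M \<Sigma>" and "\<mu> \<in> Delta M \<Sigma>"
  shows "{\<mu>} \<in> Delta_field M \<Sigma>"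
proof -
  have field: "field_of_sets M \<Sigma>" using \<Sigma> by (simp add: inf_field_def)
  then have "M \<in> \<Sigma>" "\<And>E. E \<in> \<Sigma> \<Longrightarrow> M - E \<in> \<Sigma>" unfolding field_of_sets_def by blast+
  have \<mu>: "fa_prob M \<Sigma> \<mu>" using assms(2) by (simp add: Delta_def)
  define \<F> where "\<F> = (\<lambda>E. {\<nu>\<in>Delta M \<Sigma>. \<nu> E \<ge> \<mu> E}) ` \<Sigma>"
  have "\<F> \<subseteq> {{\<nu>\<in>Delta M \<Sigma>. \<nu> E \<ge> p} | E p. E \<in> \<Sigma> \<and> 0 \<le> p \<and> p \<le> 1}"
  proof
    fix X assume "X \<in> \<F>"
    then obtain E where E: "E \<in> \<Sigma>" "X = {\<nu>\<in>Delta M \<Sigma>. \<nu> E \<ge> \<mu> E}" by (auto simp: \<F>_def)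
    moreover have "0 \<le> \<mu> E" "0 \<le> \<mu> (M - E)"
      using \<mu> E(1) \<open>E \<in> \<Sigma> \<Longrightarrow> M - E \<in> \<Sigma>\<close> unfolding fa_prob_def by blast+
    ultimately show "X \<in> {{\<nu>\<in>Delta M \<Sigma>. \<nu> E \<ge> p} | E p. E \<in> \<Sigma> \<and> 0 \<le> p \<and> p \<le> 1}"
      using fa_prob_compl[OF field \<mu> E(1)] by auto
  qed
  moreover have "\<F> \<noteq> {}" using \<open>M \<in> \<Sigma>\<close> by (auto simp: \<F>_def)
  ultimately have "\<Inter>\<F> \<in> Delta_field M \<Sigma>"
    unfolding Delta_field_def by (rule Inter_in_inf_field_generated)
  moreover have "\<Inter>\<F> = {\<mu>}"
  proof (intro equalityI subsetI)
    fix \<nu> assume "\<nu> \<in> \<Inter>\<F>"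
    then have "fa_prob M \<Sigma> \<nu>" "\<And>E. E \<in> \<Sigma> \<Longrightarrow> \<mu> E \<le> \<nu> E"
      using \<open>M \<in> \<Sigma>\<close> by (auto simp: \<F>_def Delta_def)
    then show "\<nu> \<in> {\<mu>}" using fa_prob_eq_if_le[OF field \<mu>] by blast
  next
    fix \<nu> assume "\<nu> \<in> {\<mu>}"
    then show "\<nu> \<in> \<Inter>\<F>" using assms(2) by (auto simp: \<F>_def)
  qed
  ultimately show ?thesis by simp
qed

lemma singleton_in_inf_field:
  assumes \<Sigma>: "inf_field M \<Sigma>" and x: "x \<in> M"
    and sep: "\<And>y. y \<in> M \<Longrightarrow> (\<forall>E\<in>\<Sigma>. x \<in> E \<longleftrightarrow> y \<in> E) \<Longrightarrow> x = y"
  shows "{x} \<in> \<Sigma>"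
proof -
  have \<Sigma>_closed: "M \<in> \<Sigma>" "\<And>E. E \<in> \<Sigma> \<Longrightarrow> M - E \<in> \<Sigma>"
    "\<And>\<F>. \<F> \<subseteq> \<Sigma> \<Longrightarrow> \<F> \<noteq> {} \<Longrightarrow> \<Inter>\<F> \<in> \<Sigma>"
    using \<Sigma> unfolding inf_field_def field_of_sets_def by blast+
  have "\<Inter>{E\<in>\<Sigma>. x \<in> E} \<in> \<Sigma>"
    by (rule \<Sigma>_closed(3)) (use \<Sigma>_closed(1) x in auto)
  moreover have "\<Inter>{E\<in>\<Sigma>. x \<in> E} = {x}"
  proof (intro equalityI subsetI)
    fix y assume y: "y \<in> \<Inter>{E\<in>\<Sigma>. x \<in> E}"
    have "x \<in> E \<longleftrightarrow> y \<in> E" if E: "E \<in> \<Sigma>" for E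
    proof
      show "x \<in> E \<Longrightarrow> y \<in> E" using y E by blast
      have "x \<notin> E \<Longrightarrow> y \<in> M - E" using y x \<Sigma>_closed(2)[OF E] by blast
      then show "y \<in> E \<Longrightarrow> x \<in> E" by blast
    qed
    moreover have "y \<in> M" using y x \<Sigma>_closed(1) by blast
    ultimately show "y \<in> {x}" using sep by blast
  qed blast
  ultimately show ?thesis by simp
qed

lemma inf_field_eq_Pow_if_separating:
  assumes \<Sigma>: "inf_field M \<Sigma>"
    and sep: "\<And>x y. x \<in> M \<Longrightarrow> y \<in> M \<Longrightarrow> (\<forall>E\<in>\<Sigma>. x \<in> E \<longleftrightarrow> y \<in> E) \<Longrightarrow> x = y"
  shows "\<Sigma> = Pow M"
proof
  have \<Sigma>_closed: "\<Sigma> \<subseteq> Pow M" "M \<in> \<Sigma>" "\<And>E. E \<in> \<Sigma> \<Longrightarrow> M - E \<in> \<Sigma>"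
    "\<And>\<F>. \<F> \<subseteq> \<Sigma> \<Longrightarrow> \<F> \<noteq> {} \<Longrightarrow> \<Inter>\<F> \<in> \<Sigma>"
    using \<Sigma> unfolding inf_field_def field_of_sets_def by blast+
  then show "\<Sigma> \<subseteq> Pow M" by blast
  have co_singleton: "M - {x} \<in> \<Sigma>" if "x \<in> M" for x
    using \<Sigma>_closed(3)[OF singleton_in_inf_field[OF \<Sigma> that sep[OF that]]] .
  show "Pow M \<subseteq> \<Sigma>"
  proof
    fix A assume A: "A \<in> Pow M"
    show "A \<in> \<Sigma>"
    proof (cases "A = M")
      case False
      then have "\<Inter>((\<lambda>x. M - {x}) ` (M - A)) \<in> \<Sigma>"
        using A by (intro \<Sigma>_closed(4)) (auto intro: co_singleton)
      moreover have "\<Inter>((\<lambda>x. M - {x}) ` (M - A)) = A" using A False by auto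
      ultimately show ?thesis by simp
    qed (use \<Sigma>_closed in simp)
  qed
qed

section \<open>Type spaces and morphisms\<close>

lemma inf_type_spaceD:
  assumes "inf_type_space I S M \<Sigma> T \<theta>"
  shows "M \<noteq> {}" "inf_field M \<Sigma>"
    "\<And>i. i \<in> I \<Longrightarrow> meas M \<Sigma> (Delta M \<Sigma>) (Delta_field M \<Sigma>) (T i)"
    "\<And>i m A. i \<in> I \<Longrightarrow> m \<in> M \<Longrightarrow> A \<in> \<Sigma> \<Longrightarrow> {m'\<in>M. T i m' = T i m} \<subseteq> A \<Longrightarrow> T i m A = 1"
    "meas M \<Sigma> S (Pow S) \<theta>"
  using assms by (simp_all add: inf_type_space_def)

lemma inf_universal_wrt_type_space:
  "inf_universal_wrt TYPE('c) I S M \<Sigma> T \<theta> \<Longrightarrow> inf_type_space I S M \<Sigma> T \<theta>"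
  by (simp add: inf_universal_wrt_def)

lemma inf_universal_wrt_unique:
  fixes M' :: "'c set"
  assumes "inf_universal_wrt TYPE('c) I S M \<Sigma> T \<theta>" "inf_type_space I S M' \<Sigma>' T' \<theta>'"
    "type_morphism I M' \<Sigma>' T' \<theta>' M \<Sigma> T \<theta> f" "type_morphism I M' \<Sigma>' T' \<theta>' M \<Sigma> T \<theta> g" "x \<in> M'"
  shows "f x = g x"
proof -
  have "\<forall>(M' :: 'c set) \<Sigma>' T' \<theta>'. inf_type_space I S M' \<Sigma>' T' \<theta>' \<longrightarrow>
      (\<forall>f g. type_morphism I M' \<Sigma>' T' \<theta>' M \<Sigma> T \<theta> f \<and> type_morphism I M' \<Sigma>' T' \<theta>' M \<Sigma> T \<theta> g
        \<longrightarrow> (\<forall>x\<in>M'. f x = g x))"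
    using assms(1) unfolding inf_universal_wrt_def by blast
  then show ?thesis using assms(2-5) by blast
qed

lemma star_type_space_iff_inf_Pow:
  "star_type_space I S M T \<theta> \<longleftrightarrow> inf_type_space I S M (Pow M) T \<theta>"
proof
  assume sp: "star_type_space I S M T \<theta>"
  have fa: "fa_prob M (Pow M) (T i m)" and intro: "T i m {m'\<in>M. T i m' = T i m} = 1"
    if "i \<in> I" "m \<in> M" for i m
    using sp that unfolding star_type_space_def by blast+
  have "T i m A = 1" if "i \<in> I" "m \<in> M" "A \<subseteq> M" "{m'\<in>M. T i m' = T i m} \<subseteq> A" for i m A
    using fa_prob_Pow_eq_1_mono[OF fa intro] that by blast
  moreover have "meas M (Pow M) (Delta M (Pow M)) (Delta_field M (Pow M)) (T i)" if "i \<in> I" for i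
    using fa[OF that] unfolding meas_def Delta_def by blast
  moreover have "meas M (Pow M) S (Pow S) \<theta>" "M \<noteq> {}"
    using sp unfolding star_type_space_def meas_def by blast+
  ultimately show "inf_type_space I S M (Pow M) T \<theta>"
    unfolding inf_type_space_def using inf_field_Pow by blast
next
  assume "inf_type_space I S M (Pow M) T \<theta>"
  then show "star_type_space I S M T \<theta>"
    unfolding star_type_space_def inf_type_space_def meas_def Delta_def by blast
qed

lemma star_universal_if_inf_universal_Pow:
  "inf_universal_wrt TYPE('c) I S M (Pow M) T \<theta> \<Longrightarrow> star_universal_wrt TYPE('c) I S M T \<theta>"
  unfolding inf_universal_wrt_def star_universal_wrt_def star_type_space_iff_inf_Pow by blast

lemma type_morphism_Pow_types:
  assumes f: "type_morphism I M' (Pow M') T' \<theta>' M (Pow M) T \<theta> f"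
    and sp: "star_type_space I S M T \<theta>" and "i \<in> I" "m' \<in> M'"
  shows "T i (f m') = pushforward M' f M (T' i m')"
proof
  fix E
  have "f m' \<in> M" using f \<open>m' \<in> M'\<close> unfolding type_morphism_def meas_def by blast
  then have "fa_prob M (Pow M) (T i (f m'))" using sp \<open>i \<in> I\<close> unfolding star_type_space_def by blast
  then show "T i (f m') E = pushforward M' f M (T' i m') E"
    using f assms(3,4) unfolding type_morphism_def pushforward_def fa_prob_def by auto
qed

lemma type_morphism_PowI:
  assumes "f ` M' \<subseteq> M" "\<And>m'. m' \<in> M' \<Longrightarrow> \<theta>' m' = \<theta> (f m')"
    "\<And>i m'. i \<in> I \<Longrightarrow> m' \<in> M' \<Longrightarrow> T i (f m') = pushforward M' f M (T' i m')"
  shows "type_morphism I M' (Pow M') T' \<theta>' M (Pow M) T \<theta> f"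
  using assms unfolding type_morphism_def meas_def pushforward_def by auto

section \<open>Copies of a type space\<close>

definition transport_types ::
  "('m \<Rightarrow> 'c) \<Rightarrow> 'm set \<Rightarrow> ('i \<Rightarrow> 'm \<Rightarrow> 'm set \<Rightarrow> real) \<Rightarrow> 'i \<Rightarrow> 'c \<Rightarrow> 'c set \<Rightarrow> real" where
  "transport_types e M T i z = pushforward M e (e ` M) (T i (inv_into M e z))"

lemma transport_types_image [simp]:
  "inj_on e M \<Longrightarrow> x \<in> M \<Longrightarrow> transport_types e M T i (e x) = pushforward M e (e ` M) (T i x)"
  by (simp add: transport_types_def)

lemma Collect_image_inv_into:
  assumes "inj_on e M"
  shows "{x\<in>M. e x \<in> {z\<in>e ` M. P (inv_into M e z)}} = {x\<in>M. P x}"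
  using assms by (auto simp: inv_into_f_f dest: inj_onD[OF assms])

lemma Collect_in_pushforward_field_image_iff:
  assumes "inj_on e M"
  shows "{z\<in>e ` M. P (inv_into M e z)} \<in> pushforward_field M e (e ` M) \<Sigma> \<longleftrightarrow> {x\<in>M. P x} \<in> \<Sigma>"
  using Collect_image_inv_into[OF assms] by (simp add: pushforward_field_def)

lemma transport_types_in_Delta:
  assumes e: "inj_on e M" and sp: "inf_type_space I S M \<Sigma> T \<theta>" and "i \<in> I" "z \<in> e ` M"
  shows "transport_types e M T i z \<in> Delta (e ` M) (pushforward_field M e (e ` M) \<Sigma>)"
proof -
  have "T i (inv_into M e z) \<in> Delta M \<Sigma>"
    using inf_type_spaceD(3)[OF sp \<open>i \<in> I\<close>] inv_into_into[OF \<open>z \<in> e ` M\<close>] unfolding meas_def by blast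
  then show ?thesis
    using fa_prob_pushforward[of M \<Sigma> _ e "e ` M"] by (simp add: transport_types_def Delta_def)
qed

lemma transport_types_preimage:
  assumes e: "inj_on e M" and sp: "inf_type_space I S M \<Sigma> T \<theta>" and i: "i \<in> I"
    and E: "E \<in> pushforward_field M e (e ` M) \<Sigma>" and p: "0 \<le> p" "p \<le> 1"
  shows "{z\<in>e ` M. p \<le> transport_types e M T i z E} \<in> pushforward_field M e (e ` M) \<Sigma>"
proof -
  define B where "B = {x\<in>M. e x \<in> E}"
  have "B \<in> \<Sigma>" "E \<subseteq> e ` M" using E by (auto simp: pushforward_field_def B_def)
  have T: "meas M \<Sigma> (Delta M \<Sigma>) (Delta_field M \<Sigma>) (T i)" using inf_type_spaceD(3)[OF sp i] .
  then have "{x\<in>M. T i x \<in> {\<mu>\<in>Delta M \<Sigma>. p \<le> \<mu> B}} \<in> \<Sigma>"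
    using Delta_field_generator[OF \<open>B \<in> \<Sigma>\<close> p] unfolding meas_def by blast
  moreover have "{x\<in>M. T i x \<in> {\<mu>\<in>Delta M \<Sigma>. p \<le> \<mu> B}} = {x\<in>M. p \<le> T i x B}"
    using T unfolding meas_def by blast
  ultimately have "{z\<in>e ` M. p \<le> T i (inv_into M e z) B} \<in> pushforward_field M e (e ` M) \<Sigma>"
    using Collect_in_pushforward_field_image_iff[OF e, of "\<lambda>x. p \<le> T i x B"] by simp
  moreover have "{z\<in>e ` M. p \<le> transport_types e M T i z E} = {z\<in>e ` M. p \<le> T i (inv_into M e z) B}"
    using \<open>E \<subseteq> e ` M\<close> by (simp add: transport_types_def pushforward_def B_def)
  ultimately show ?thesis by simp
qed

lemma meas_transport_types:
  assumes e: "inj_on e M" and sp: "inf_type_space I S M \<Sigma> T \<theta>" and i: "i \<in> I"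
  defines "\<Sigma>e \<equiv> pushforward_field M e (e ` M) \<Sigma>"
  shows "meas (e ` M) \<Sigma>e (Delta (e ` M) \<Sigma>e) (Delta_field (e ` M) \<Sigma>e) (transport_types e M T i)"
  unfolding Delta_field_def
proof (rule meas_inf_field_generatedI)
  show "inf_field (e ` M) \<Sigma>e"
    unfolding \<Sigma>e_def by (rule inf_field_pushforward_field[OF inf_type_spaceD(2)[OF sp]]) blast
  show "transport_types e M T i ` e ` M \<subseteq> Delta (e ` M) \<Sigma>e"
    using transport_types_in_Delta[OF e sp i] unfolding \<Sigma>e_def by blast
next
  fix G assume "G \<in> {{\<nu>\<in>Delta (e ` M) \<Sigma>e. \<nu> E \<ge> p} | E p. E \<in> \<Sigma>e \<and> 0 \<le> p \<and> p \<le> 1}"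
  then obtain E p where Ep: "E \<in> \<Sigma>e" "0 \<le> p" "p \<le> 1" "G = {\<nu>\<in>Delta (e ` M) \<Sigma>e. p \<le> \<nu> E}"
    by blast
  then have "{z\<in>e ` M. transport_types e M T i z \<in> G} = {z\<in>e ` M. p \<le> transport_types e M T i z E}"
    using transport_types_in_Delta[OF e sp i] unfolding \<Sigma>e_def by blast
  then show "{z\<in>e ` M. transport_types e M T i z \<in> G} \<in> \<Sigma>e"
    using transport_types_preimage[OF e sp i] Ep(1-3) unfolding \<Sigma>e_def by simp
qed blast

lemma inf_type_space_transport:
  assumes e: "inj_on e M" and sp: "inf_type_space I S M \<Sigma> T \<theta>"
  shows "inf_type_space I S (e ` M) (pushforward_field M e (e ` M) \<Sigma>) (transport_types e M T)
    (\<theta> \<circ> inv_into M e)"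
  unfolding inf_type_space_def
proof (intro conjI ballI impI)
  show "e ` M \<noteq> {}" using inf_type_spaceD(1)[OF sp] by blast
  show "inf_field (e ` M) (pushforward_field M e (e ` M) \<Sigma>)"
    using inf_field_pushforward_field[OF inf_type_spaceD(2)[OF sp]] by blast
  show "meas (e ` M) (pushforward_field M e (e ` M) \<Sigma>) (Delta (e ` M) (pushforward_field M e (e ` M) \<Sigma>))
      (Delta_field (e ` M) (pushforward_field M e (e ` M) \<Sigma>)) (transport_types e M T i)" if "i \<in> I" for i
    using meas_transport_types[OF e sp that] .
next
  fix i z A
  assume i: "i \<in> I" and z: "z \<in> e ` M" and A: "A \<in> pushforward_field M e (e ` M) \<Sigma>"
    and sub: "{z'\<in>e ` M. transport_types e M T i z' = transport_types e M T i z} \<subseteq> A"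
  obtain x where x: "x \<in> M" "z = e x" using z by blast
  define B where "B = {w\<in>M. e w \<in> A}"
  have "B \<in> \<Sigma>" "A \<subseteq> e ` M" using A by (auto simp: pushforward_field_def B_def)
  have "{w\<in>M. T i w = T i x} \<subseteq> B" using sub e x by (auto simp: B_def)
  then have "T i x B = 1" using inf_type_spaceD(4)[OF sp i x(1) \<open>B \<in> \<Sigma>\<close>] by blast
  then show "transport_types e M T i z A = 1"
    using e x \<open>A \<subseteq> e ` M\<close> by (simp add: pushforward_def B_def)
next
  have "\<theta> x \<in> S" if "x \<in> M" for x
    using inf_type_spaceD(5)[OF sp] that unfolding meas_def by blast
  moreover have "{x\<in>M. \<theta> x \<in> X} \<in> \<Sigma>" if "X \<subseteq> S" for X
    using inf_type_spaceD(5)[OF sp] that unfolding meas_def by blast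
  ultimately show "meas (e ` M) (pushforward_field M e (e ` M) \<Sigma>) S (Pow S) (\<theta> \<circ> inv_into M e)"
    unfolding meas_def using Collect_in_pushforward_field_image_iff[OF e, of "\<lambda>x. \<theta> x \<in> _"]
    by (auto simp: inv_into_f_f[OF e])
qed

lemma type_morphism_transport:
  assumes e: "inj_on e M" and \<Sigma>: "\<Sigma> \<subseteq> Pow M" and \<phi>: "\<phi> ` M \<subseteq> M"
    and \<phi>_\<Sigma>: "\<And>E w. E \<in> \<Sigma> \<Longrightarrow> w \<in> M \<Longrightarrow> \<phi> w \<in> E \<longleftrightarrow> w \<in> E"
    and \<phi>_\<theta>: "\<And>w. w \<in> M \<Longrightarrow> \<theta> (\<phi> w) = \<theta> w"
    and \<phi>_T: "\<And>i w. i \<in> I \<Longrightarrow> w \<in> M \<Longrightarrow> T i (\<phi> w) = T i w"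
  shows "type_morphism I (e ` M) (pushforward_field M e (e ` M) \<Sigma>) (transport_types e M T)
    (\<theta> \<circ> inv_into M e) M \<Sigma> T \<theta> (\<phi> \<circ> inv_into M e)"
proof -
  have pre: "{x\<in>M. e x \<in> {z\<in>e ` M. (\<phi> \<circ> inv_into M e) z \<in> E}} = E" if E: "E \<in> \<Sigma>" for E
  proof -
    have "E \<subseteq> M" using E \<Sigma> by blast
    then show ?thesis using Collect_image_inv_into[OF e, of "\<lambda>x. \<phi> x \<in> E"] \<phi>_\<Sigma>[OF E] by auto
  qed
  show ?thesis
    unfolding type_morphism_def meas_def
  proof (intro conjI ballI)
    fix z assume "z \<in> e ` M"
    then obtain x where x: "x \<in> M" "z = e x" by blast
    then have "inv_into M e z = x" using e by (simp add: inv_into_f_f)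
    then show "(\<phi> \<circ> inv_into M e) z \<in> M" "(\<theta> \<circ> inv_into M e) z = \<theta> ((\<phi> \<circ> inv_into M e) z)"
      using \<phi> x(1) \<phi>_\<theta>[OF x(1)] by auto
  next
    fix E assume "E \<in> \<Sigma>"
    then show "{z\<in>e ` M. (\<phi> \<circ> inv_into M e) z \<in> E} \<in> pushforward_field M e (e ` M) \<Sigma>"
      using pre by (simp add: pushforward_field_def)
  next
    fix i z E assume i: "i \<in> I" and "z \<in> e ` M" and E: "E \<in> \<Sigma>"
    then obtain x where x: "x \<in> M" "z = e x" by blast
    have image: "transport_types e M T i z Z = T i x {w\<in>M. e w \<in> Z}" if "Z \<subseteq> e ` M" for Z
      unfolding x(2) transport_types_image[OF e x(1)] pushforward_def by (rule if_P[OF that])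
    have "T i ((\<phi> \<circ> inv_into M e) z) E = T i x E"
      using e x \<phi>_T[OF i x(1)] by (simp add: inv_into_f_f)
    also have "\<dots> = T i x {w\<in>M. e w \<in> {z'\<in>e ` M. (\<phi> \<circ> inv_into M e) z' \<in> E}}"
      by (simp only: pre[OF E])
    also have "\<dots> = transport_types e M T i z {z'\<in>e ` M. (\<phi> \<circ> inv_into M e) z' \<in> E}"
      by (rule image[symmetric]) blast
    finally show "T i ((\<phi> \<circ> inv_into M e) z) E =
        transport_types e M T i z {z'\<in>e ` M. (\<phi> \<circ> inv_into M e) z' \<in> E}" .
  qed
qed

section \<open>Universal type spaces\<close>

(* Both the identity and the swap of x and y induce morphisms from a copy of the space. *)
lemma inf_universal_inseparable_eq:
  assumes U: "inf_universal_wrt TYPE('c) I S M \<Sigma> T \<theta>" and e: "inj_on (e :: 'm \<Rightarrow> 'c) M"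
    and xy: "x \<in> M" "y \<in> M" and sep: "\<forall>E\<in>\<Sigma>. x \<in> E \<longleftrightarrow> y \<in> E"
  shows "x = y"
proof -
  have sp: "inf_type_space I S M \<Sigma> T \<theta>" using inf_universal_wrt_type_space[OF U] .
  have \<Sigma>: "inf_field M \<Sigma>" using inf_type_spaceD(2)[OF sp] .
  have \<Sigma>_Pow: "\<Sigma> \<subseteq> Pow M" using inf_field_subset_Pow[OF \<Sigma>] .
  have "{w\<in>M. \<theta> w \<in> {\<theta> x}} \<in> \<Sigma>"
    using inf_type_spaceD(5)[OF sp] xy(1) unfolding meas_def by blast
  then have "\<theta> y = \<theta> x" using bspec[OF sep] xy by fastforce
  moreover have "T i y = T i x" if "i \<in> I" for i
  proof -
    have T: "meas M \<Sigma> (Delta M \<Sigma>) (Delta_field M \<Sigma>) (T i)" using inf_type_spaceD(3)[OF sp that] .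
    then have "T i x \<in> Delta M \<Sigma>" using xy(1) unfolding meas_def by blast
    then have "{T i x} \<in> Delta_field M \<Sigma>" by (rule singleton_in_Delta_field[OF \<Sigma>])
    then have "{w\<in>M. T i w \<in> {T i x}} \<in> \<Sigma>" using T unfolding meas_def by blast
    then show ?thesis using bspec[OF sep] xy by fastforce
  qed
  ultimately have swap: "type_morphism I (e ` M) (pushforward_field M e (e ` M) \<Sigma>) (transport_types e M T)
      (\<theta> \<circ> inv_into M e) M \<Sigma> T \<theta> ((\<lambda>w. if w = x then y else w) \<circ> inv_into M e)"
    using sep xy by (intro type_morphism_transport[OF e \<Sigma>_Pow]) auto
  have id: "type_morphism I (e ` M) (pushforward_field M e (e ` M) \<Sigma>) (transport_types e M T)
      (\<theta> \<circ> inv_into M e) M \<Sigma> T \<theta> ((\<lambda>w. w) \<circ> inv_into M e)"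
    by (intro type_morphism_transport[OF e \<Sigma>_Pow]) auto
  have "((\<lambda>w. if w = x then y else w) \<circ> inv_into M e) (e x) = ((\<lambda>w. w) \<circ> inv_into M e) (e x)"
    using inf_universal_wrt_unique[OF U inf_type_space_transport[OF e sp] swap id] xy(1) by blast
  then show "x = y" using e xy by (simp split: if_splits)
qed

lemma inf_universal_eq_Pow:
  assumes U: "inf_universal_wrt TYPE('c) I S M \<Sigma> T \<theta>" and e: "inj_on (e :: 'm \<Rightarrow> 'c) M"
  shows "\<Sigma> = Pow M"
proof (rule inf_field_eq_Pow_if_separating)
  show "inf_field M \<Sigma>" using inf_type_spaceD(2)[OF inf_universal_wrt_type_space[OF U]] .
next
  fix x y assume "x \<in> M" "y \<in> M" "\<forall>E\<in>\<Sigma>. x \<in> E \<longleftrightarrow> y \<in> E"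
  then show "x = y" by (rule inf_universal_inseparable_eq[OF U e])
qed

locale universal_star_type_space =
  fixes I :: "'i set" and S :: "'s set" and M :: "'m set"
    and T :: "'i \<Rightarrow> 'm \<Rightarrow> 'm set \<Rightarrow> real" and \<theta> :: "'m \<Rightarrow> 's"
    and copy0 copy1 :: "'m \<Rightarrow> 'c" and origin :: "'c \<Rightarrow> 'm"
  assumes universal: "star_universal_wrt TYPE('c) I S M T \<theta>"
    and origin_copy0 [simp]: "origin (copy0 x) = x"
    and origin_copy1 [simp]: "origin (copy1 x) = x"
    and copy0_neq_copy1 [simp]: "copy0 x \<noteq> copy1 y"
begin

lemma star_type_space: "star_type_space I S M T \<theta>"
  using universal by (simp add: star_universal_wrt_def)

lemma M_nonempty: "M \<noteq> {}"
  using star_type_space by (simp add: star_type_space_def)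

lemma fa_prob_T: "i \<in> I \<Longrightarrow> x \<in> M \<Longrightarrow> fa_prob M (Pow M) (T i x)"
  using star_type_space by (simp add: star_type_space_def)

lemma T_introspective: "i \<in> I \<Longrightarrow> x \<in> M \<Longrightarrow> T i x {m'\<in>M. T i m' = T i x} = 1"
  using star_type_space by (simp add: star_type_space_def)

lemma morphism_exists:
  fixes M' :: "'c set"
  assumes "star_type_space I S M' T' \<theta>'"
  obtains f where "type_morphism I M' (Pow M') T' \<theta>' M (Pow M) T \<theta> f"
  using universal assms unfolding star_universal_wrt_def by metis

lemma morphism_unique:
  fixes M' :: "'c set"
  assumes "star_type_space I S M' T' \<theta>'" "type_morphism I M' (Pow M') T' \<theta>' M (Pow M) T \<theta> f"
    "type_morphism I M' (Pow M') T' \<theta>' M (Pow M) T \<theta> g" "x \<in> M'"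
  shows "f x = g x"
  using universal assms unfolding star_universal_wrt_def by metis

lemma inj_on_copy0: "inj_on copy0 A"
  by (metis inj_onI origin_copy0)

lemma copy_morphism_fixes:
  assumes f: "type_morphism I (copy0 ` M) (Pow (copy0 ` M)) (transport_types copy0 M T)
      (\<theta> \<circ> inv_into M copy0) M (Pow M) T \<theta> f" and x: "x \<in> M"
  shows "f (copy0 x) = x"
proof -
  have "inf_type_space I S M (Pow M) T \<theta>" using star_type_space by (simp add: star_type_space_iff_inf_Pow)
  from inf_type_space_transport[OF inj_on_copy0 this]
  have "star_type_space I S (copy0 ` M) (transport_types copy0 M T) (\<theta> \<circ> inv_into M copy0)"
    by (simp add: star_type_space_iff_inf_Pow)
  moreover have "type_morphism I (copy0 ` M) (pushforward_field M copy0 (copy0 ` M) (Pow M))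
      (transport_types copy0 M T) (\<theta> \<circ> inv_into M copy0) M (Pow M) T \<theta> ((\<lambda>w. w) \<circ> inv_into M copy0)"
    by (rule type_morphism_transport[OF inj_on_copy0]) auto
  then have "type_morphism I (copy0 ` M) (Pow (copy0 ` M)) (transport_types copy0 M T)
      (\<theta> \<circ> inv_into M copy0) M (Pow M) T \<theta> ((\<lambda>w. w) \<circ> inv_into M copy0)"
    by simp
  ultimately have "f (copy0 x) = ((\<lambda>w. w) \<circ> inv_into M copy0) (copy0 x)"
    using morphism_unique f x by blast
  then show ?thesis using inj_on_copy0 x by (simp add: inv_into_f_f)
qed

(* M together with a twin copy1 x of every point x: at the twins player a believes \<nu>, carried
   over to the twins, while the state of nature and the other players' beliefs are those of x. *)
definition twin_carrier :: "'c set" where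
  "twin_carrier = copy0 ` M \<union> copy1 ` M"

definition twin_types :: "'i \<Rightarrow> ('m set \<Rightarrow> real) \<Rightarrow> 'i \<Rightarrow> 'c \<Rightarrow> 'c set \<Rightarrow> real" where
  "twin_types a \<nu> i z = (if z \<in> copy1 ` M \<and> i = a then pushforward M copy1 twin_carrier \<nu>
     else pushforward M copy0 twin_carrier (T i (origin z)))"

lemma twin_types_copy0 [simp]:
  "twin_types a \<nu> i (copy0 x) = pushforward M copy0 twin_carrier (T i x)"
  by (auto simp: twin_types_def)

lemma twin_types_copy1_self [simp]:
  "x \<in> M \<Longrightarrow> twin_types a \<nu> a (copy1 x) = pushforward M copy1 twin_carrier \<nu>"
  by (simp add: twin_types_def)

lemma twin_types_copy1_other [simp]:
  "i \<noteq> a \<Longrightarrow> twin_types a \<nu> i (copy1 x) = pushforward M copy0 twin_carrier (T i x)"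
  by (simp add: twin_types_def)

lemma twin_carrier_copies: "copy0 ` M \<subseteq> twin_carrier" "copy1 ` M \<subseteq> twin_carrier"
  by (auto simp: twin_carrier_def)

lemma twin_types_copied:
  assumes i: "i \<in> I" and x: "x \<in> M"
    and eq: "twin_types a \<nu> i z = pushforward M copy0 twin_carrier (T i x)"
  shows "fa_prob twin_carrier (Pow twin_carrier) (twin_types a \<nu> i z)"
    and "twin_types a \<nu> i z {z'\<in>twin_carrier. twin_types a \<nu> i z' = twin_types a \<nu> i z} = 1"
proof -
  show "fa_prob twin_carrier (Pow twin_carrier) (twin_types a \<nu> i z)"
    unfolding eq using fa_prob_Pow_pushforward[OF fa_prob_T[OF i x] twin_carrier_copies(1)] .
  have "copy0 ` {u\<in>M. T i u = T i x} \<subseteq> {z'\<in>twin_carrier. twin_types a \<nu> i z' = twin_types a \<nu> i z}"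
    using twin_carrier_copies(1) eq by auto
  then show "twin_types a \<nu> i z {z'\<in>twin_carrier. twin_types a \<nu> i z' = twin_types a \<nu> i z} = 1"
    unfolding eq using twin_carrier_copies(1) T_introspective[OF i x] fa_prob_T[OF i x]
    by (intro pushforward_eq_1) auto
qed

lemma twin_star_type_space:
  assumes \<nu>: "fa_prob M (Pow M) \<nu>"
  shows "star_type_space I S twin_carrier (twin_types a \<nu>) (\<theta> \<circ> origin)"
  unfolding star_type_space_def
proof (intro conjI ballI)
  show "twin_carrier \<noteq> {}" using M_nonempty twin_carrier_copies by blast
  fix i z assume i: "i \<in> I" and z: "z \<in> twin_carrier"
  let ?class = "{z'\<in>twin_carrier. twin_types a \<nu> i z' = twin_types a \<nu> i z}"
  from z consider (copy0) x where "x \<in> M" "z = copy0 x" | (self) x where "x \<in> M" "z = copy1 x" "i = a"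
    | (other) x where "x \<in> M" "z = copy1 x" "i \<noteq> a"
    unfolding twin_carrier_def by blast
  then have "fa_prob twin_carrier (Pow twin_carrier) (twin_types a \<nu> i z) \<and> twin_types a \<nu> i z ?class = 1"
  proof cases
    case (self x)
    have "copy1 ` M \<subseteq> ?class" using twin_carrier_copies(2) self by auto
    then show ?thesis
      using self fa_prob_Pow_pushforward[OF \<nu> twin_carrier_copies(2)] \<nu> twin_carrier_copies(2)
      unfolding fa_prob_def by (auto intro!: pushforward_eq_1[OF \<nu>])
  next
    case (copy0 x)
    then have "twin_types a \<nu> i z = pushforward M copy0 twin_carrier (T i x)" by simp
    then show ?thesis using twin_types_copied[OF i \<open>x \<in> M\<close>] by blast
  next
    case (other x)
    then have "twin_types a \<nu> i z = pushforward M copy0 twin_carrier (T i x)" by simp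
    then show ?thesis using twin_types_copied[OF i \<open>x \<in> M\<close>] by blast
  qed
  then show "fa_prob twin_carrier (Pow twin_carrier) (twin_types a \<nu> i z)"
    and "twin_types a \<nu> i z ?class = 1" by blast+
next
  fix z assume "z \<in> twin_carrier"
  then show "(\<theta> \<circ> origin) z \<in> S"
    using star_type_space unfolding twin_carrier_def star_type_space_def by auto
qed

lemma twin_morphism_copy0:
  assumes f: "type_morphism I twin_carrier (Pow twin_carrier) (twin_types a \<nu>) (\<theta> \<circ> origin) M (Pow M) T \<theta> f"
    and x: "x \<in> M"
  shows "f (copy0 x) = x"
proof (rule copy_morphism_fixes[OF _ x])
  have sub: "copy0 ` M \<subseteq> twin_carrier" by (auto simp: twin_carrier_def)
  then have into: "f ` copy0 ` M \<subseteq> M" using f unfolding type_morphism_def meas_def by blast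
  show "type_morphism I (copy0 ` M) (Pow (copy0 ` M)) (transport_types copy0 M T)
      (\<theta> \<circ> inv_into M copy0) M (Pow M) T \<theta> f"
  proof (rule type_morphism_PowI[OF into])
    fix z assume z: "z \<in> copy0 ` M"
    then obtain u where u: "u \<in> M" "z = copy0 u" by blast
    have "\<theta> (origin z) = \<theta> (f z)" using f z sub unfolding type_morphism_def by auto
    then show "(\<theta> \<circ> inv_into M copy0) z = \<theta> (f z)" using u inj_on_copy0 by (simp add: inv_into_f_f)
  next
    fix i z assume i: "i \<in> I" and "z \<in> copy0 ` M"
    then obtain u where u: "u \<in> M" "z = copy0 u" by blast
    have "T i (f z) = pushforward twin_carrier f M (pushforward M copy0 twin_carrier (T i u))"
      using type_morphism_Pow_types[OF f star_type_space i] u sub by auto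
    also have "\<dots> = pushforward M (f \<circ> copy0) M (T i u)" using sub by (rule pushforward_comp)
    also have "\<dots> = pushforward (copy0 ` M) f M (pushforward M copy0 (copy0 ` M) (T i u))"
      by (simp add: pushforward_comp)
    also have "\<dots> = pushforward (copy0 ` M) f M (transport_types copy0 M T i z)"
      using u inj_on_copy0 by simp
    finally show "T i (f z) = pushforward (copy0 ` M) f M (transport_types copy0 M T i z)" .
  qed
qed

lemma twin_morphism_copy1:
  assumes f: "type_morphism I twin_carrier (Pow twin_carrier) (twin_types a \<nu>) (\<theta> \<circ> origin) M (Pow M) T \<theta> f"
    and w: "w \<in> M"
  shows "f (copy1 w) \<in> M" "\<theta> (f (copy1 w)) = \<theta> w"
    and "\<And>j. j \<in> I \<Longrightarrow> j \<noteq> a \<Longrightarrow> T j (f (copy1 w)) = T j w"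
    and "a \<in> I \<Longrightarrow> T a (f (copy1 w)) = pushforward M (f \<circ> copy1) M \<nu>"
proof -
  have sub: "copy0 ` M \<subseteq> twin_carrier" "copy1 ` M \<subseteq> twin_carrier" by (auto simp: twin_carrier_def)
  have "copy1 w \<in> twin_carrier" using sub(2) w by blast
  then show "f (copy1 w) \<in> M" "\<theta> (f (copy1 w)) = \<theta> w"
    using f unfolding type_morphism_def meas_def by (auto dest: bspec[of _ _ "copy1 w"])
  fix j assume j: "j \<in> I" "j \<noteq> a"
  have "T j (f (copy1 w)) = pushforward twin_carrier f M (pushforward M copy0 twin_carrier (T j w))"
    using type_morphism_Pow_types[OF f star_type_space j(1)] w sub j(2) by auto
  also have "\<dots> = pushforward M (f \<circ> copy0) M (T j w)" using sub(1) by (rule pushforward_comp)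
  also have "\<dots> = pushforward M (\<lambda>u. u) M (T j w)"
    using twin_morphism_copy0[OF f] by (intro pushforward_cong) simp
  also have "\<dots> = T j w" using fa_prob_T[OF j(1) w] by (rule pushforward_id)
  finally show "T j (f (copy1 w)) = T j w" .
next
  assume a: "a \<in> I"
  have "copy1 ` M \<subseteq> twin_carrier" by (auto simp: twin_carrier_def)
  moreover have "T a (f (copy1 w)) = pushforward twin_carrier f M (pushforward M copy1 twin_carrier \<nu>)"
    using type_morphism_Pow_types[OF f star_type_space a] w \<open>copy1 ` M \<subseteq> twin_carrier\<close> by auto
  ultimately show "T a (f (copy1 w)) = pushforward M (f \<circ> copy1) M \<nu>" by (simp add: pushforward_comp)
qed

(* What player a is uncertain about at x; the entries of a itself and of non-players are dummies. *)
definition state_and_others :: "'i \<Rightarrow> 'm \<Rightarrow> 's \<times> ('i \<Rightarrow> 'm set \<Rightarrow> real)" where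
  "state_and_others a x = (\<theta> x, \<lambda>j. if j \<in> I \<and> j \<noteq> a then T j x else (\<lambda>_. 0))"

lemma belief_realizable:
  assumes a: "a \<in> I"
    and \<rho>: "\<rho> \<in> Delta (state_and_others a ` M) (Pow (state_and_others a ` M))"
  shows "\<exists>y\<in>M. pushforward M (state_and_others a) (state_and_others a ` M) (T a y) = \<rho>"
proof -
  define K where "K = state_and_others a ` M"
  define r where "r = inv_into M (state_and_others a)"
  have r: "r ` K \<subseteq> M" "\<And>v. v \<in> K \<Longrightarrow> state_and_others a (r v) = v"
    unfolding r_def K_def by (auto intro: inv_into_into f_inv_into_f)
  define \<nu> where "\<nu> = pushforward K r M \<rho>"
  have \<rho>_fa: "fa_prob K (Pow K) \<rho>" using \<rho> by (simp add: K_def Delta_def)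
  then have \<nu>: "fa_prob M (Pow M) \<nu>" unfolding \<nu>_def using r(1) by (rule fa_prob_Pow_pushforward)
  obtain f where f: "type_morphism I twin_carrier (Pow twin_carrier) (twin_types a \<nu>) (\<theta> \<circ> origin) M (Pow M) T \<theta> f"
    using morphism_exists[OF twin_star_type_space[OF \<nu>]] by blast
  obtain w where w: "w \<in> M" using M_nonempty by blast
  have twin: "f (copy1 u) \<in> M" "state_and_others a (f (copy1 u)) = state_and_others a u" if "u \<in> M" for u
    using twin_morphism_copy1[OF f that] by (auto simp: state_and_others_def)
  have "pushforward M (state_and_others a) K (T a (f (copy1 w)))
      = pushforward M (state_and_others a) K (pushforward M (f \<circ> copy1) M \<nu>)"
    using twin_morphism_copy1(4)[OF f w a] by simp
  also have "\<dots> = pushforward M (state_and_others a \<circ> (f \<circ> copy1)) K \<nu>"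
    using twin(1) by (intro pushforward_comp) auto
  also have "\<dots> = pushforward M (state_and_others a) K \<nu>"
    using twin(2) by (intro pushforward_cong) simp
  also have "\<dots> = pushforward K (state_and_others a \<circ> r) K \<rho>"
    unfolding \<nu>_def using r(1) by (rule pushforward_comp)
  also have "\<dots> = pushforward K (\<lambda>v. v) K \<rho>"
    using r(2) by (intro pushforward_cong) simp
  also have "\<dots> = \<rho>" using \<rho>_fa by (rule pushforward_id)
  finally show ?thesis using twin(1)[OF w] unfolding K_def by blast
qed

lemma Delta_state_and_others_lepoll:
  assumes a: "a \<in> I" and b: "b \<in> I" and "a \<noteq> b"
  shows "Delta (state_and_others a ` M) (Pow (state_and_others a ` M)) \<lesssim> state_and_others b ` M"
proof -
  let ?K = "state_and_others a ` M"
  have "\<forall>\<rho>\<in>Delta ?K (Pow ?K). \<exists>y. y \<in> M \<and> pushforward M (state_and_others a) ?K (T a y) = \<rho>"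
    using belief_realizable[OF a] by blast
  from bchoice[OF this] obtain y where y: "\<And>\<rho>. \<rho> \<in> Delta ?K (Pow ?K) \<Longrightarrow>
      y \<rho> \<in> M \<and> pushforward M (state_and_others a) ?K (T a (y \<rho>)) = \<rho>"
    by blast
  have "inj_on (\<lambda>\<rho>. state_and_others b (y \<rho>)) (Delta ?K (Pow ?K))"
  proof (rule inj_onI)
    fix \<rho>1 \<rho>2 assume \<rho>: "\<rho>1 \<in> Delta ?K (Pow ?K)" "\<rho>2 \<in> Delta ?K (Pow ?K)"
      and eq: "state_and_others b (y \<rho>1) = state_and_others b (y \<rho>2)"
    have T_eq: "T a (y \<rho>1) = T a (y \<rho>2)"
      using arg_cong[OF eq, of "\<lambda>p. snd p a"] a \<open>a \<noteq> b\<close> by (simp add: state_and_others_def)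
    have "\<rho>1 = pushforward M (state_and_others a) ?K (T a (y \<rho>1))" using y[OF \<rho>(1)] by simp
    also have "\<dots> = pushforward M (state_and_others a) ?K (T a (y \<rho>2))" by (simp only: T_eq)
    also have "\<dots> = \<rho>2" using y[OF \<rho>(2)] by simp
    finally show "\<rho>1 = \<rho>2" .
  qed
  moreover have "(\<lambda>\<rho>. state_and_others b (y \<rho>)) ` Delta ?K (Pow ?K) \<subseteq> state_and_others b ` M"
    using y by blast
  ultimately show ?thesis unfolding lepoll_def by blast
qed

lemma \<theta>_surjective:
  assumes "s \<in> S"
  obtains x where "x \<in> M" "\<theta> x = s"
proof -
  define P where "P = {undefined :: 'c}"
  have "star_type_space I S P (\<lambda>i z. point_mass P undefined) (\<lambda>z. s)"
    using assms unfolding star_type_space_def P_def by (auto simp: fa_prob_point_mass point_mass_def)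
  then obtain f where "type_morphism I P (Pow P) (\<lambda>i z. point_mass P undefined) (\<lambda>z. s) M (Pow M) T \<theta> f"
    by (rule morphism_exists)
  then have "f undefined \<in> M" "\<theta> (f undefined) = s" unfolding type_morphism_def meas_def P_def by auto
  then show thesis by (rule that)
qed


lemma two_players_two_states_False:
  assumes "a \<in> I" "b \<in> I" "a \<noteq> b" "s \<in> S" "t \<in> S" "s \<noteq> t"
  shows False
proof -
  obtain x y where "x \<in> M" "\<theta> x = s" "y \<in> M" "\<theta> y = t"
    using \<theta>_surjective[OF assms(4)] \<theta>_surjective[OF assms(5)] by metis
  then have "state_and_others a x \<noteq> state_and_others a y"
    using assms(6) by (auto simp: state_and_others_def)
  then show False
    using Delta_Pow_lepoll_cycle_False[OF Delta_state_and_others_lepoll[OF assms(1-3)]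
        Delta_state_and_others_lepoll[OF assms(2,1) assms(3)[symmetric]]] \<open>x \<in> M\<close> \<open>y \<in> M\<close>
    by blast
qed

end

(* The test spaces only need a carrier type containing two disjoint copies of 'm. *)
definition embed0 :: "'m \<Rightarrow> ('m + 'b) set set" where
  "embed0 x = {{Inl x}}"

definition embed1 :: "'m \<Rightarrow> ('m + 'b) set set" where
  "embed1 x = {{Inl x}, {}}"

definition unembed :: "('m + 'b) set set \<Rightarrow> 'm" where
  "unembed z = (SOME x. {Inl x} \<in> z)"

lemma unembed_embed0 [simp]: "unembed (embed0 x) = x"
  by (simp add: unembed_def embed0_def)

lemma unembed_embed1 [simp]: "unembed (embed1 x) = x"
  by (simp add: unembed_def embed1_def)

lemma embed0_neq_embed1 [simp]: "embed0 x \<noteq> embed1 y"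
proof
  assume "embed0 x = embed1 y"
  moreover have "{} \<in> embed1 y" "{} \<notin> embed0 x" by (simp_all add: embed0_def embed1_def)
  ultimately show False by metis
qed

theorem not_star_universal:
  assumes "\<exists>i j. i \<in> I \<and> j \<in> I \<and> i \<noteq> j" and "\<exists>s t. s \<in> S \<and> t \<in> S \<and> s \<noteq> t"
  shows "\<not> star_universal_wrt TYPE(('m + 'b) set set) I S (M :: 'm set) T \<theta>"
proof
  assume "star_universal_wrt TYPE(('m + 'b) set set) I S M T \<theta>"
  then interpret universal_star_type_space I S M T \<theta> "embed0 :: 'm \<Rightarrow> ('m + 'b) set set" embed1 unembed
    by unfold_locales simp_all
  show False using assms two_players_two_states_False by blast
qed

theorem not_inf_universal:
  assumes "\<exists>i j. i \<in> I \<and> j \<in> I \<and> i \<noteq> j" and "\<exists>s t. s \<in> S \<and> t \<in> S \<and> s \<noteq> t"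
  shows "\<not> inf_universal_wrt TYPE(('m + 'b) set set) I S (M :: 'm set) \<Sigma> T \<theta>"
proof
  assume U: "inf_universal_wrt TYPE(('m + 'b) set set) I S M \<Sigma> T \<theta>"
  have "inj_on (embed0 :: 'm \<Rightarrow> ('m + 'b) set set) M" by (metis inj_onI unembed_embed0)
  then have "\<Sigma> = Pow M" by (rule inf_universal_eq_Pow[OF U])
  with U have "star_universal_wrt TYPE(('m + 'b) set set) I S M T \<theta>"
    using star_universal_if_inf_universal_Pow by blast
  then show False using not_star_universal[OF assms] by blast
qed

theorem corollary1:
  fixes I :: "'i set" and S :: "'s set"
  assumes "\<exists>i j. i \<in> I \<and> j \<in> I \<and> i \<noteq> j"
    and "\<exists>s t. s \<in> S \<and> t \<in> S \<and> s \<noteq> t"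
  shows "(\<forall>(M::'m set) \<Sigma> T \<theta>.
            \<not> inf_universal_wrt TYPE(('m + 's + 'i + nat) set set) I S M \<Sigma> T \<theta>) \<and>
         (\<forall>(M::'m set) T \<theta>.
            \<not> star_universal_wrt TYPE(('m + 's + 'i + nat) set set) I S M T \<theta>)"
  using not_inf_universal[OF assms] not_star_universal[OF assms] by blast

end
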